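(* Let $(V,E)$ be a digraph with $V$ countably infinite, $\mu_1,\mu_2$ probability measures on $V$, and $Q$ a finitely decomposable acyclic flow on $(V,E)$ with $\operatorname{div}Q=\mu_1-\mu_2$. Then there exists a coupling $\rho$ between $\mu_1$ and $\mu_2$ such that $\rho(x,y)=0$ whenever there is no directed path from $x$ to $y$ in the digraph $(V,E(Q))$.
   Context: A flow on $(V,E)$ is a map $Q:E\to[0,+\infty)$, with $\operatorname{div}Q(x)=\sum_{y:(x,y)\in E}Q(x,y)-\sum_{y:(y,x)\in E}Q(y,x)$. $E(Q)=\{e\in E:Q(e)>0\}$; $Q$ is acyclic if $(V,E(Q))$ has no directed cycle. For a directed path $\gamma=(x_0,\dots,x_n)$, $Q_\gamma(x,y)=1$ if $(x,y)=(x_i,x_{i+1})$ for some $i$, $0$ otherwise. $Q$ is finitely decomposable if $Q=\sum_nq_nQ_{\gamma_n}$ pointwise for a countable family of finite self-avoiding directed paths $\gamma_n$ and weights $q_n\ge0$ with $\sum_nq_n<\infty$. A coupling is a probability measure on $V\times V$ with marginals $\mu_1,\mu_2$. A path of length zero from $x$ to $x$ is allowed. *)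

theory Defs
  imports "HOL-Probability.Probability"
begin

text \<open>A flow on (V,E): nonnegative, and vanishing off E (flows are maps E \<rightarrow> [0,\<infinity>),
  represented as functions on all pairs that are zero outside E).\<close>
definition is_flow :: "'a set \<Rightarrow> ('a \<times> 'a) set \<Rightarrow> ('a \<times> 'a \<Rightarrow> real) \<Rightarrow> bool" where
  "is_flow V E Q \<longleftrightarrow> (\<forall>e. 0 \<le> Q e) \<and> (\<forall>e. e \<notin> E \<longrightarrow> Q e = 0)"

definition flow_div :: "('a \<times> 'a) set \<Rightarrow> ('a \<times> 'a \<Rightarrow> real) \<Rightarrow> 'a \<Rightarrow> real" where
  "flow_div E Q x =
     (\<Sum>\<^sub>\<infinity> y\<in>{y. (x,y) \<in> E}. Q (x,y)) - (\<Sum>\<^sub>\<infinity> y\<in>{y. (y,x) \<in> E}. Q (y,x))"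

definition flow_support :: "('a \<times> 'a) set \<Rightarrow> ('a \<times> 'a \<Rightarrow> real) \<Rightarrow> ('a \<times> 'a) set" where
  "flow_support E Q = {e \<in> E. Q e > 0}"

definition acyclic_flow :: "('a \<times> 'a) set \<Rightarrow> ('a \<times> 'a \<Rightarrow> real) \<Rightarrow> bool" where
  "acyclic_flow E Q \<longleftrightarrow> acyclic (flow_support E Q)"

definition directed_path :: "'a set \<Rightarrow> ('a \<times> 'a) set \<Rightarrow> 'a list \<Rightarrow> bool" where
  "directed_path V E \<gamma> \<longleftrightarrow> \<gamma> \<noteq> [] \<and> set \<gamma> \<subseteq> V \<and>
     (\<forall>i. Suc i < length \<gamma> \<longrightarrow> (\<gamma> ! i, \<gamma> ! Suc i) \<in> E)"

definition self_avoiding_path :: "'a set \<Rightarrow> ('a \<times> 'a) set \<Rightarrow> 'a list \<Rightarrow> bool" where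
  "self_avoiding_path V E \<gamma> \<longleftrightarrow> directed_path V E \<gamma> \<and> distinct \<gamma>"

definition path_flow :: "'a list \<Rightarrow> 'a \<times> 'a \<Rightarrow> real" where
  "path_flow \<gamma> e = (if \<exists>i. Suc i < length \<gamma> \<and> e = (\<gamma> ! i, \<gamma> ! Suc i) then 1 else 0)"

text \<open>Countable families are indexed by nat (finite families padded with zero weights).\<close>
definition finitely_decomposable :: "'a set \<Rightarrow> ('a \<times> 'a) set \<Rightarrow> ('a \<times> 'a \<Rightarrow> real) \<Rightarrow> bool" where
  "finitely_decomposable V E Q \<longleftrightarrow>
     (\<exists>(\<gamma> :: nat \<Rightarrow> 'a list) (q :: nat \<Rightarrow> real).
        (\<forall>n. self_avoiding_path V E (\<gamma> n)) \<and> (\<forall>n. 0 \<le> q n) \<and> summable q \<and>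
        (\<forall>e. (\<lambda>n. q n * path_flow (\<gamma> n) e) sums Q e))"

definition is_coupling :: "('a \<times> 'a) pmf \<Rightarrow> 'a pmf \<Rightarrow> 'a pmf \<Rightarrow> bool" where
  "is_coupling \<rho> \<mu>1 \<mu>2 \<longleftrightarrow> map_pmf fst \<rho> = \<mu>1 \<and> map_pmf snd \<rho> = \<mu>2"

end

theory Submission
  imports Defs
begin

text \<open>
  Write \<open>Q = (\<Sum>n. q\<^sub>n Q\<^sub>\<gamma>\<^sub>n)\<close> with self-avoiding paths \<open>\<gamma>\<^sub>n\<close> from \<open>s\<^sub>n = hd \<gamma>\<^sub>n\<close> to
  \<open>t\<^sub>n = last \<gamma>\<^sub>n\<close>. Every vertex of a path other than its endpoints has exactly one incoming and one
  outgoing path edge, so the divergence condition becomes the balance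
  \<open>\<mu>\<^sub>1 + (\<Sum>n. q\<^sub>n \<delta>\<^sub>t\<^sub>n) = \<mu>\<^sub>2 + (\<Sum>n. q\<^sub>n \<delta>\<^sub>s\<^sub>n)\<close>.
  Read it as a system of weighted jumps \<open>s\<^sub>n \<rightarrow> t\<^sub>n\<close>: the mass \<open>a x\<close> arriving at \<open>x\<close>, initially or
  by a jump, equals \<open>\<mu>\<^sub>2 x\<close> plus the weight of the jumps leaving \<open>x\<close>. A walker started according to
  \<open>\<mu>\<^sub>1\<close> stops at \<open>x\<close> with probability \<open>\<mu>\<^sub>2 x / a x\<close> and otherwise takes a jump \<open>s\<^sub>n = x \<rightarrow> t\<^sub>n\<close>
  with probability \<open>q\<^sub>n / a x\<close>. Its expected number of visits to \<open>x\<close> is at most \<open>a x\<close>, so its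
  expected number of jumps is at most \<open>\<Sum>n. q\<^sub>n < \<infinity>\<close> and it stops almost surely. The joint law of
  starting and stopping point is a coupling of \<open>\<mu>\<^sub>1\<close> and \<open>\<mu>\<^sub>2\<close> that only joins \<open>x\<close> to vertices
  reached from \<open>x\<close> along paths of positive weight, hence inside the support of \<open>Q\<close>.
\<close>

lemma nn_integral_count_space_swap:
  "(\<integral>\<^sup>+x. \<integral>\<^sup>+y. f x y \<partial>count_space UNIV \<partial>count_space UNIV)
     = (\<integral>\<^sup>+y. \<integral>\<^sup>+x. f x y \<partial>count_space UNIV \<partial>count_space UNIV)"
  using nn_integral_fst_count_space[of "case_prod f"] nn_integral_snd_count_space[of "case_prod f"]
  by simp

lemma ennreal_mult_divide_le: "(a::ennreal) * (b / a) \<le> b"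
proof (cases "a = 0 \<or> a = top")
  case False
  then show ?thesis
    using ennreal_mult_divide_eq[of a b] by (simp add: ennreal_times_divide mult.commute)
qed auto

lemma nn_integral_count_space_eq_imp_eq:
  fixes f g :: "'a \<Rightarrow> ennreal"
  assumes le: "\<And>x. f x \<le> g x"
    and eq: "(\<integral>\<^sup>+x. f x \<partial>count_space UNIV) = (\<integral>\<^sup>+x. g x \<partial>count_space UNIV)"
    and fin: "(\<integral>\<^sup>+x. g x \<partial>count_space UNIV) \<noteq> \<infinity>"
  shows "f x = g x"
proof -
  have "(\<integral>\<^sup>+x. g x \<partial>count_space UNIV) = (\<integral>\<^sup>+x. f x \<partial>count_space UNIV) + (\<integral>\<^sup>+x. g x - f x \<partial>count_space UNIV)"
    by (subst nn_integral_add[symmetric]) (auto intro!: nn_integral_cong simp: add_diff_inverse_ennreal le)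
  then have "(\<integral>\<^sup>+x. g x - f x \<partial>count_space UNIV) = 0"
    using eq fin by (metis add.right_neutral ennreal_add_left_cancel)
  then have "g x - f x = 0"
    using nn_integral_ge_point[of x UNIV "\<lambda>x. g x - f x"] by simp
  then show ?thesis using le[of x] by (simp add: diff_eq_0_iff_ennreal)
qed

lemma ennreal_pmf_map_fst: "ennreal (pmf (map_pmf fst \<rho>) x) = (\<integral>\<^sup>+y. pmf \<rho> (x, y) \<partial>count_space UNIV)"
proof -
  have "ennreal (pmf (map_pmf fst \<rho>) x) = (\<integral>\<^sup>+p. ennreal (pmf \<rho> p) * indicator (fst -` {x}) p \<partial>count_space UNIV)"
    by (simp add: ennreal_pmf_map nn_integral_measure_pmf)
  also have "\<dots> = (\<integral>\<^sup>+a. \<integral>\<^sup>+y. ennreal (pmf \<rho> (a, y)) * indicator {x} a \<partial>count_space UNIV \<partial>count_space UNIV)"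
    by (subst nn_integral_fst_count_space[symmetric]) (simp add: indicator_def)
  also have "\<dots> = (\<integral>\<^sup>+y. pmf \<rho> (x, y) \<partial>count_space UNIV)"
    by (simp add: nn_integral_multc nn_integral_indicator_singleton)
  finally show ?thesis .
qed

lemma ennreal_pmf_map_snd: "ennreal (pmf (map_pmf snd \<rho>) y) = (\<integral>\<^sup>+x. pmf \<rho> (x, y) \<partial>count_space UNIV)"
proof -
  have "ennreal (pmf (map_pmf snd \<rho>) y) = (\<integral>\<^sup>+p. ennreal (pmf \<rho> p) * indicator (snd -` {y}) p \<partial>count_space UNIV)"
    by (simp add: ennreal_pmf_map nn_integral_measure_pmf)
  also have "\<dots> = (\<integral>\<^sup>+b. \<integral>\<^sup>+x. ennreal (pmf \<rho> (x, b)) * indicator {y} b \<partial>count_space UNIV \<partial>count_space UNIV)"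
    by (subst nn_integral_snd_count_space[symmetric]) (simp add: indicator_def)
  also have "\<dots> = (\<integral>\<^sup>+x. pmf \<rho> (x, y) \<partial>count_space UNIV)"
    by (simp add: nn_integral_multc nn_integral_indicator_singleton)
  finally show ?thesis .
qed

lemma coupling_of_transport_plan:
  fixes \<mu>1 \<mu>2 :: "'a pmf" and g :: "'a \<Rightarrow> 'a \<Rightarrow> ennreal"
  assumes row: "\<And>x. (\<integral>\<^sup>+y. g x y \<partial>count_space UNIV) = pmf \<mu>1 x"
    and col: "\<And>y. (\<integral>\<^sup>+x. g x y \<partial>count_space UNIV) = pmf \<mu>2 y"
  shows "\<exists>\<rho>. is_coupling \<rho> \<mu>1 \<mu>2 \<and> (\<forall>x y. pmf \<rho> (x, y) \<noteq> 0 \<longrightarrow> g x y \<noteq> 0)"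
proof -
  have g_real: "ennreal (enn2real (g x y)) = g x y" for x y
  proof -
    have "g x y \<le> pmf \<mu>1 x"
      using nn_integral_ge_point[of y UNIV "g x"] row[of x] by simp
    then show ?thesis
      using ennreal_less_top order_le_less_trans by (intro ennreal_enn2real) blast
  qed
  have "(\<integral>\<^sup>+p. ennreal (enn2real (case_prod g p)) \<partial>count_space UNIV) = (\<integral>\<^sup>+x. \<integral>\<^sup>+y. g x y \<partial>count_space UNIV \<partial>count_space UNIV)"
    by (simp add: g_real nn_integral_fst_count_space[symmetric])
  also have "\<dots> = 1"
    by (simp add: row nn_integral_pmf)
  finally have total: "(\<integral>\<^sup>+p. ennreal (enn2real (case_prod g p)) \<partial>count_space UNIV) = 1" .
  define \<rho> where "\<rho> = embed_pmf (\<lambda>p. enn2real (case_prod g p))"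
  have pmf_\<rho>: "ennreal (pmf \<rho> (x, y)) = g x y" for x y
    unfolding \<rho>_def by (subst pmf_embed_pmf) (use total g_real in auto)
  have "ennreal (pmf (map_pmf fst \<rho>) x) = ennreal (pmf \<mu>1 x)" for x
    by (simp add: ennreal_pmf_map_fst pmf_\<rho> row)
  moreover have "ennreal (pmf (map_pmf snd \<rho>) y) = ennreal (pmf \<mu>2 y)" for y
    by (simp add: ennreal_pmf_map_snd pmf_\<rho> col)
  ultimately have "map_pmf fst \<rho> = \<mu>1" "map_pmf snd \<rho> = \<mu>2"
    by (auto intro!: pmf_eqI)
  moreover have "g x y \<noteq> 0" if "pmf \<rho> (x, y) \<noteq> 0" for x y
    using that pmf_\<rho>[of x y] by auto
  ultimately show ?thesis
    unfolding is_coupling_def by blast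
qed

locale balanced_jumps =
  fixes m1 m2 :: "'a \<Rightarrow> ennreal" and w :: "nat \<Rightarrow> ennreal" and s t :: "nat \<Rightarrow> 'a"
  assumes m1_total: "(\<integral>\<^sup>+x. m1 x \<partial>count_space UNIV) = 1"
    and m2_total: "(\<integral>\<^sup>+x. m2 x \<partial>count_space UNIV) = 1"
    and total_weight_finite: "(\<Sum>n. w n) \<noteq> \<infinity>"
    and balance: "\<And>x. m1 x + (\<Sum>n. w n * indicator {t n} x) = m2 x + (\<Sum>n. w n * indicator {s n} x)"
begin

definition jumps :: "('a \<times> 'a) set" where
  "jumps = {(s n, t n) | n. w n \<noteq> 0}"

definition jump :: "'a \<Rightarrow> 'a \<Rightarrow> ennreal" where
  "jump x y = (\<Sum>n. w n * indicator {s n} x * indicator {t n} y)"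

definition jumps_out :: "'a \<Rightarrow> ennreal" where
  "jumps_out x = (\<Sum>n. w n * indicator {s n} x)"

definition jumps_in :: "'a \<Rightarrow> ennreal" where
  "jumps_in x = (\<Sum>n. w n * indicator {t n} x)"

definition arrivals :: "'a \<Rightarrow> ennreal" where
  "arrivals x = m1 x + jumps_in x"

definition step :: "'a \<Rightarrow> 'a \<Rightarrow> ennreal" where
  "step x y = jump x y / arrivals x"

definition stop :: "'a \<Rightarrow> ennreal" where
  "stop x = m2 x / arrivals x"

primrec walk :: "nat \<Rightarrow> 'a \<Rightarrow> 'a \<Rightarrow> ennreal" where
  "walk 0 z = (\<lambda>y. m1 z * indicator {z} y)"
| "walk (Suc k) z = (\<lambda>y. \<integral>\<^sup>+x. walk k z x * step x y \<partial>count_space UNIV)"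

definition visits :: "nat \<Rightarrow> 'a \<Rightarrow> ennreal" where
  "visits k y = (\<integral>\<^sup>+z. walk k z y \<partial>count_space UNIV)"

definition alive :: "nat \<Rightarrow> 'a \<Rightarrow> ennreal" where
  "alive k z = (\<integral>\<^sup>+y. walk k z y \<partial>count_space UNIV)"

definition plan :: "'a \<Rightarrow> 'a \<Rightarrow> ennreal" where
  "plan z y = (\<Sum>k. walk k z y) * stop y"

lemma nn_integral_jump_fst: "(\<integral>\<^sup>+x. jump x y \<partial>count_space UNIV) = jumps_in y"
proof -
  have "(\<integral>\<^sup>+x. jump x y \<partial>count_space UNIV)
      = (\<Sum>n. \<integral>\<^sup>+x. (w n * indicator {t n} y) * indicator {s n} x \<partial>count_space UNIV)"
    unfolding jump_def by (subst nn_integral_suminf) (auto simp: ac_simps)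
  then show ?thesis
    by (simp add: nn_integral_cmult_indicator jumps_in_def)
qed

lemma nn_integral_jump_snd: "(\<integral>\<^sup>+y. jump x y \<partial>count_space UNIV) = jumps_out x"
proof -
  have "(\<integral>\<^sup>+y. jump x y \<partial>count_space UNIV)
      = (\<Sum>n. \<integral>\<^sup>+y. (w n * indicator {s n} x) * indicator {t n} y \<partial>count_space UNIV)"
    unfolding jump_def by (subst nn_integral_suminf) auto
  then show ?thesis
    by (simp add: nn_integral_cmult_indicator jumps_out_def)
qed

lemma nn_integral_jumps_out: "(\<integral>\<^sup>+x. jumps_out x \<partial>count_space UNIV) = (\<Sum>n. w n)"
  unfolding jumps_out_def by (subst nn_integral_suminf) (auto simp: nn_integral_cmult_indicator)

lemma arrivals_eq_stop_plus_out: "arrivals x = m2 x + jumps_out x"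
  using balance[of x] by (simp add: arrivals_def jumps_in_def jumps_out_def)

lemma arrivals_finite: "arrivals x < \<top>"
proof -
  have "m1 x \<le> 1"
    using nn_integral_ge_point[of x UNIV m1] m1_total by simp
  then have "m1 x < \<top>"
    using ennreal_one_less_top by (rule le_less_trans)
  moreover have "jumps_in x \<le> (\<Sum>n. w n)"
    unfolding jumps_in_def by (intro suminf_le) (auto simp: indicator_def)
  then have "jumps_in x < \<top>"
    using total_weight_finite by (simp add: le_less_trans top.not_eq_extremum)
  ultimately show ?thesis
    by (simp add: arrivals_def)
qed

lemma walk_support: "walk k z y \<noteq> 0 \<Longrightarrow> (z, y) \<in> jumps\<^sup>*"
proof (induction k arbitrary: y)
  case (Suc k)
  then obtain x where "walk k z x \<noteq> 0" and "step x y \<noteq> 0"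
    by (auto simp: nn_integral_0_iff_AE)
  then obtain n where "w n * indicator {s n} x * indicator {t n} y \<noteq> (0::ennreal)"
    by (auto simp: step_def jump_def suminf_eq_zero_iff[OF summableI])
  then have "(x, y) \<in> jumps"
    unfolding jumps_def by (auto simp: indicator_def split: if_splits)
  with Suc.IH \<open>walk k z x \<noteq> 0\<close> show ?case by (meson rtrancl.rtrancl_into_rtrancl)
qed (auto simp: indicator_def split: if_splits)

lemma visits_0: "visits 0 y = m1 y"
proof -
  have "visits 0 y = (\<integral>\<^sup>+z. m1 y * indicator {y} z \<partial>count_space UNIV)"
    unfolding visits_def by (intro nn_integral_cong) (auto simp: indicator_def)
  then show ?thesis by (simp add: nn_integral_cmult_indicator)
qed

lemma visits_Suc: "visits (Suc k) y = (\<integral>\<^sup>+x. visits k x * step x y \<partial>count_space UNIV)"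
  unfolding visits_def
  by (simp add: nn_integral_count_space_swap[of "\<lambda>z x. walk k z x * step x y"] nn_integral_multc)

text \<open>Induction on the number of jumps: mass reaching \<open>y\<close> after a jump comes from some \<open>x\<close>, which
  sends at most the fraction \<open>jump x y / arrivals x\<close> of what is there to \<open>y\<close>.\<close>
lemma sum_visits_le_arrivals: "(\<Sum>k. visits k y) \<le> arrivals y"
proof -
  have "(\<Sum>k<K. visits k y) \<le> arrivals y" for K
  proof (induction K arbitrary: y)
    case (Suc K)
    have "(\<Sum>k<K. visits (Suc k) y) = (\<integral>\<^sup>+x. (\<Sum>k<K. visits k x) * step x y \<partial>count_space UNIV)"
      by (simp add: visits_Suc nn_integral_sum sum_distrib_right)
    also have "\<dots> \<le> (\<integral>\<^sup>+x. arrivals x * step x y \<partial>count_space UNIV)"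
      by (intro nn_integral_mono mult_right_mono Suc.IH) simp
    also have "\<dots> \<le> (\<integral>\<^sup>+x. jump x y \<partial>count_space UNIV)"
      unfolding step_def by (intro nn_integral_mono ennreal_mult_divide_le)
    finally have "(\<Sum>k<K. visits (Suc k) y) \<le> jumps_in y"
      by (simp add: nn_integral_jump_fst)
    then show ?case
      unfolding sum.lessThan_Suc_shift by (simp add: visits_0 arrivals_def add_left_mono)
  qed simp
  then show ?thesis
    by (intro suminf_le_const summableI)
qed

lemma walk_le_arrivals: "walk k z y \<le> arrivals y"
proof -
  have "walk k z y \<le> visits k y"
    unfolding visits_def by (rule nn_integral_ge_point) simp
  also have "\<dots> \<le> (\<Sum>k. visits k y)"
    using sum_le_suminf[of "\<lambda>k. visits k y" "{k}"] by simp
  also have "\<dots> \<le> arrivals y"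
    by (rule sum_visits_le_arrivals)
  finally show ?thesis .
qed

lemma alive_0: "alive 0 z = m1 z"
  unfolding alive_def by (simp add: nn_integral_cmult_indicator)

lemma alive_Suc: "alive (Suc k) z = (\<integral>\<^sup>+x. walk k z x * (jumps_out x / arrivals x) \<partial>count_space UNIV)"
proof -
  have "alive (Suc k) z = (\<integral>\<^sup>+y. \<integral>\<^sup>+x. walk k z x * step x y \<partial>count_space UNIV \<partial>count_space UNIV)"
    by (simp add: alive_def)
  also have "\<dots> = (\<integral>\<^sup>+x. walk k z x * (\<integral>\<^sup>+y. step x y \<partial>count_space UNIV) \<partial>count_space UNIV)"
    by (subst nn_integral_count_space_swap) (simp add: nn_integral_cmult)
  also have "\<dots> = (\<integral>\<^sup>+x. walk k z x * (jumps_out x / arrivals x) \<partial>count_space UNIV)"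
    by (simp add: step_def nn_integral_divide nn_integral_jump_snd)
  finally show ?thesis .
qed

lemma nn_integral_alive_Suc:
  "(\<integral>\<^sup>+z. alive (Suc k) z \<partial>count_space UNIV)
     = (\<integral>\<^sup>+x. visits k x * (jumps_out x / arrivals x) \<partial>count_space UNIV)"
  unfolding alive_Suc visits_def
  by (simp add: nn_integral_count_space_swap[of "\<lambda>z x. walk k z x * (jumps_out x / arrivals x)"]
      nn_integral_multc)

text \<open>Since \<open>arrivals = m2 + jumps_out\<close>, every walker either stops or jumps.\<close>
lemma stopped_plus_alive_Suc:
  "(\<integral>\<^sup>+y. walk k z y * stop y \<partial>count_space UNIV) + alive (Suc k) z = alive k z"
proof -
  have "walk k z x * stop x + walk k z x * (jumps_out x / arrivals x) = walk k z x" for x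
  proof (cases "arrivals x = 0")
    case True
    then show ?thesis using walk_le_arrivals[of k z x] by simp
  next
    case False
    then have "stop x + jumps_out x / arrivals x = 1"
      using arrivals_finite[of x]
      by (simp add: stop_def flip: add_divide_distrib_ennreal arrivals_eq_stop_plus_out)
    then show ?thesis by (simp flip: distrib_left)
  qed
  then show ?thesis
    unfolding alive_Suc by (simp add: alive_def flip: nn_integral_add)
qed

lemma sum_alive_Suc_finite: "(\<Sum>k. alive (Suc k) z) \<noteq> \<infinity>"
proof -
  have "(\<Sum>k. alive (Suc k) z) \<le> (\<integral>\<^sup>+z. (\<Sum>k. alive (Suc k) z) \<partial>count_space UNIV)"
    by (rule nn_integral_ge_point) simp
  also have "\<dots> = (\<Sum>k. \<integral>\<^sup>+x. visits k x * (jumps_out x / arrivals x) \<partial>count_space UNIV)"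
    by (simp add: nn_integral_suminf nn_integral_alive_Suc)
  also have "\<dots> = (\<integral>\<^sup>+x. (\<Sum>k. visits k x) * (jumps_out x / arrivals x) \<partial>count_space UNIV)"
    by (subst nn_integral_suminf[symmetric]) (simp_all add: ennreal_suminf_multc)
  also have "\<dots> \<le> (\<integral>\<^sup>+x. arrivals x * (jumps_out x / arrivals x) \<partial>count_space UNIV)"
    by (intro nn_integral_mono mult_right_mono sum_visits_le_arrivals) simp
  also have "\<dots> \<le> (\<integral>\<^sup>+x. jumps_out x \<partial>count_space UNIV)"
    by (intro nn_integral_mono ennreal_mult_divide_le)
  finally show ?thesis
    using total_weight_finite by (auto simp: nn_integral_jumps_out top_unique)
qed

lemma plan_fst_marginal: "(\<integral>\<^sup>+y. plan z y \<partial>count_space UNIV) = m1 z"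
proof -
  define stopped where "stopped k = (\<integral>\<^sup>+y. walk k z y * stop y \<partial>count_space UNIV)" for k
  have "(\<Sum>k. stopped k) + (\<Sum>k. alive (Suc k) z) = (\<Sum>k. stopped k + alive (Suc k) z)"
    by (rule suminf_add) auto
  also have "\<dots> = (\<Sum>k. alive k z)"
    by (simp add: stopped_def stopped_plus_alive_Suc)
  also have "\<dots> = m1 z + (\<Sum>k. alive (Suc k) z)"
    using suminf_offset[of "\<lambda>k. alive k z" 1] by (simp add: alive_0 add.commute)
  finally have "(\<Sum>k. stopped k) = m1 z"
    using sum_alive_Suc_finite[of z] by (metis ennreal_add_left_cancel add.commute)
  moreover have "(\<integral>\<^sup>+y. plan z y \<partial>count_space UNIV) = (\<Sum>k. stopped k)"
    unfolding plan_def stopped_def ennreal_suminf_multc[symmetric] by (rule nn_integral_suminf) simp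
  ultimately show ?thesis
    by simp
qed

lemma plan_snd_marginal_le: "(\<integral>\<^sup>+z. plan z y \<partial>count_space UNIV) \<le> m2 y"
proof -
  have "(\<integral>\<^sup>+z. plan z y \<partial>count_space UNIV) = (\<integral>\<^sup>+z. (\<Sum>k. walk k z y) \<partial>count_space UNIV) * stop y"
    unfolding plan_def by (rule nn_integral_multc) simp
  also have "\<dots> = (\<Sum>k. visits k y) * stop y"
    using nn_integral_suminf[of "\<lambda>k z. walk k z y" "count_space UNIV"] by (simp add: visits_def)
  also have "\<dots> \<le> arrivals y * stop y"
    by (intro mult_right_mono sum_visits_le_arrivals) simp
  also have "\<dots> \<le> m2 y"
    unfolding stop_def by (rule ennreal_mult_divide_le)
  finally show ?thesis .
qed

text \<open>Both marginals have total mass one, so the inequality cannot be strict anywhere.\<close>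
lemma plan_snd_marginal: "(\<integral>\<^sup>+z. plan z y \<partial>count_space UNIV) = m2 y"
proof (rule nn_integral_count_space_eq_imp_eq[where f = "\<lambda>y. \<integral>\<^sup>+z. plan z y \<partial>count_space UNIV"])
  show "(\<integral>\<^sup>+y. \<integral>\<^sup>+z. plan z y \<partial>count_space UNIV \<partial>count_space UNIV) = (\<integral>\<^sup>+y. m2 y \<partial>count_space UNIV)"
    by (subst nn_integral_count_space_swap) (simp add: plan_fst_marginal m1_total m2_total)
qed (simp_all add: plan_snd_marginal_le m2_total)

lemma plan_support:
  assumes "plan z y \<noteq> 0"
  shows "(z, y) \<in> jumps\<^sup>*"
proof -
  from assms obtain k where "walk k z y \<noteq> 0"
    by (auto simp: plan_def suminf_eq_zero_iff[OF summableI])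
  then show ?thesis
    by (rule walk_support)
qed

end

lemma infsum_eq_enn2real_nn_integral:
  fixes f :: "'a \<Rightarrow> real"
  assumes nonneg: "\<And>y. 0 \<le> f y" and zero: "\<And>y. y \<notin> A \<Longrightarrow> f y = 0"
    and finite: "(\<integral>\<^sup>+y. f y \<partial>count_space UNIV) \<noteq> \<infinity>"
  shows "infsum f A = enn2real (\<integral>\<^sup>+y. f y \<partial>count_space UNIV)"
proof -
  have restrict: "(\<integral>\<^sup>+y. f y \<partial>count_space UNIV) = (\<integral>\<^sup>+y. f y \<partial>count_space A)"
    by (auto simp: nn_integral_count_space_indicator indicator_def zero intro!: nn_integral_cong)
  have "integrable (count_space A) f"
    using finite nonneg by (intro integrableI_nonneg) (auto simp: restrict top.not_eq_extremum)
  then have "infsum f A = infsetsum f A"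
    by (simp add: infsetsum_infsum abs_summable_on_def)
  also have "\<dots> = enn2real (\<integral>\<^sup>+y. f y \<partial>count_space A)"
    using finite nonneg by (intro infsetsum_conv_nn_integral) (auto simp: restrict)
  finally show ?thesis
    by (simp add: restrict)
qed

lemma path_flow_out_degree:
  assumes "distinct \<gamma>"
  shows "(\<integral>\<^sup>+y. ennreal (path_flow \<gamma> (x, y)) \<partial>count_space UNIV) = indicator (set (butlast \<gamma>)) x"
proof (cases "x \<in> set (butlast \<gamma>)")
  case True
  then obtain i where "i < length (butlast \<gamma>)" "butlast \<gamma> ! i = x"
    by (auto simp: in_set_conv_nth)
  then have i: "Suc i < length \<gamma>" "\<gamma> ! i = x"
    by (auto simp: nth_butlast)
  have "ennreal (path_flow \<gamma> (x, y)) = indicator {\<gamma> ! Suc i} y" for y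
    using i assms by (auto simp: path_flow_def indicator_def nth_eq_iff_index_eq)
  then show ?thesis
    using True by simp
next
  case False
  have "\<gamma> ! i \<in> set (butlast \<gamma>)" if "Suc i < length \<gamma>" for i
    using that nth_mem[of i "butlast \<gamma>"] by (simp add: nth_butlast)
  then have "path_flow \<gamma> (x, y) = 0" for y
    using False by (auto simp: path_flow_def)
  then show ?thesis
    using False by simp
qed

lemma path_flow_in_degree:
  assumes "distinct \<gamma>"
  shows "(\<integral>\<^sup>+y. ennreal (path_flow \<gamma> (y, x)) \<partial>count_space UNIV) = indicator (set (tl \<gamma>)) x"
proof (cases "x \<in> set (tl \<gamma>)")
  case True
  then obtain i where "i < length (tl \<gamma>)" "tl \<gamma> ! i = x"
    by (auto simp: in_set_conv_nth)
  then have i: "Suc i < length \<gamma>" "\<gamma> ! Suc i = x"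
    by (auto simp: nth_tl)
  have "ennreal (path_flow \<gamma> (y, x)) = indicator {\<gamma> ! i} y" for y
    using i assms by (auto simp: path_flow_def indicator_def nth_eq_iff_index_eq)
  then show ?thesis
    using True by simp
next
  case False
  have "\<gamma> ! Suc i \<in> set (tl \<gamma>)" if "Suc i < length \<gamma>" for i
    using that nth_mem[of i "tl \<gamma>"] by (simp add: nth_tl)
  then have "path_flow \<gamma> (y, x) = 0" for y
    using False by (auto simp: path_flow_def)
  then show ?thesis
    using False by simp
qed

lemma indicator_butlast_plus_last:
  assumes "distinct \<gamma>" "\<gamma> \<noteq> []"
  shows "indicator (set (butlast \<gamma>)) x + indicator {last \<gamma>} x = (indicator (set \<gamma>) x :: ennreal)"
proof -
  have "distinct (butlast \<gamma> @ [last \<gamma>])"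
    using assms by simp
  moreover have "set \<gamma> = insert (last \<gamma>) (set (butlast \<gamma>))"
    using assms(2) by (cases \<gamma> rule: rev_cases) auto
  ultimately show ?thesis
    by (auto simp: indicator_def)
qed

lemma indicator_tl_plus_hd:
  assumes "distinct \<gamma>" "\<gamma> \<noteq> []"
  shows "indicator (set (tl \<gamma>)) x + indicator {hd \<gamma>} x = (indicator (set \<gamma>) x :: ennreal)"
  using assms by (cases \<gamma>) (auto simp: indicator_def)

lemma directed_path_hd_last:
  assumes "directed_path V R \<gamma>"
  shows "(hd \<gamma>, last \<gamma>) \<in> R\<^sup>*"
proof -
  have "k < length \<gamma> \<Longrightarrow> (\<gamma> ! 0, \<gamma> ! k) \<in> R\<^sup>*" for k
    using assms by (induction k) (auto simp: directed_path_def intro: rtrancl_into_rtrancl)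
  then show ?thesis
    using assms by (simp add: directed_path_def hd_conv_nth last_conv_nth)
qed

locale path_decomposition =
  fixes V :: "'a set" and E :: "('a \<times> 'a) set" and Q :: "'a \<times> 'a \<Rightarrow> real"
    and \<gamma> :: "nat \<Rightarrow> 'a list" and q :: "nat \<Rightarrow> real"
  assumes paths: "\<And>n. self_avoiding_path V E (\<gamma> n)"
    and weights_nonneg: "\<And>n. 0 \<le> q n" and weights_summable: "summable q"
    and decomposition: "\<And>e. (\<lambda>n. q n * path_flow (\<gamma> n) e) sums Q e"
begin

lemma path_nonempty: "\<gamma> n \<noteq> []" and path_distinct: "distinct (\<gamma> n)"
  and path_in_V: "set (\<gamma> n) \<subseteq> V"
  using paths[of n] by (auto simp: self_avoiding_path_def directed_path_def)

lemma weights_finite: "(\<Sum>n. ennreal (q n)) \<noteq> \<infinity>"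
  using weights_nonneg weights_summable by (simp add: suminf_ennreal2)

lemma ennreal_flow_eq_suminf: "ennreal (Q e) = (\<Sum>n. ennreal (q n) * ennreal (path_flow (\<gamma> n) e))"
proof -
  have nonneg: "0 \<le> q n * path_flow (\<gamma> n) e" for n
    using weights_nonneg[of n] by (simp add: path_flow_def)
  have "ennreal (Q e) = (\<Sum>n. ennreal (q n * path_flow (\<gamma> n) e))"
    using decomposition[of e] nonneg by (simp add: sums_iff suminf_ennreal2)
  also have "\<dots> = (\<Sum>n. ennreal (q n) * ennreal (path_flow (\<gamma> n) e))"
    using weights_nonneg by (simp add: ennreal_mult path_flow_def)
  finally show ?thesis .
qed

lemma flow_nonneg: "0 \<le> Q e"
  using sums_le[OF _ sums_zero decomposition[of e]] weights_nonneg by (simp add: path_flow_def)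

lemma flow_zero_outside:
  assumes "e \<notin> E"
  shows "Q e = 0"
proof -
  have "path_flow (\<gamma> n) e = 0" for n
    using paths[of n] assms
    by (auto simp: path_flow_def self_avoiding_path_def directed_path_def)
  then have "(\<lambda>n. 0) sums Q e"
    using decomposition[of e] by simp
  then show ?thesis
    by (rule sums_unique2[OF _ sums_zero])
qed

lemma path_weight_le_flow:
  assumes "Suc i < length (\<gamma> n)"
  shows "q n \<le> Q (\<gamma> n ! i, \<gamma> n ! Suc i)"
proof -
  let ?e = "(\<gamma> n ! i, \<gamma> n ! Suc i)"
  have "path_flow (\<gamma> n) ?e = 1"
    using assms by (auto simp: path_flow_def)
  then have "ennreal (q n) \<le> (\<Sum>m. ennreal (q m) * ennreal (path_flow (\<gamma> m) ?e))"
    using sum_le_suminf[of "\<lambda>m. ennreal (q m) * ennreal (path_flow (\<gamma> m) ?e)" "{n}"] by simp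
  then show ?thesis
    using flow_nonneg by (simp flip: ennreal_flow_eq_suminf)
qed

lemma path_in_flow_support:
  assumes "0 < q n"
  shows "directed_path V (flow_support E Q) (\<gamma> n)"
proof -
  have "Suc i < length (\<gamma> n) \<Longrightarrow> 0 < Q (\<gamma> n ! i, \<gamma> n ! Suc i)" for i
    using path_weight_le_flow[of i n] assms by simp
  then show ?thesis
    using paths[of n] by (auto simp: self_avoiding_path_def directed_path_def flow_support_def)
qed

lemma outflow_eq:
  "(\<integral>\<^sup>+y. Q (x, y) \<partial>count_space UNIV) = (\<Sum>n. ennreal (q n) * indicator (set (butlast (\<gamma> n))) x)"
  by (simp add: ennreal_flow_eq_suminf nn_integral_suminf nn_integral_cmult path_flow_out_degree path_distinct)

lemma inflow_eq:
  "(\<integral>\<^sup>+y. Q (y, x) \<partial>count_space UNIV) = (\<Sum>n. ennreal (q n) * indicator (set (tl (\<gamma> n))) x)"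
  by (simp add: ennreal_flow_eq_suminf nn_integral_suminf nn_integral_cmult path_flow_in_degree path_distinct)

lemma outflow_finite: "(\<integral>\<^sup>+y. Q (x, y) \<partial>count_space UNIV) < \<top>"
proof -
  have "(\<Sum>n. ennreal (q n) * indicator (set (butlast (\<gamma> n))) x) \<le> (\<Sum>n. ennreal (q n))"
    by (intro suminf_le) (auto simp: indicator_def)
  then show ?thesis
    using weights_finite by (simp add: outflow_eq le_less_trans top.not_eq_extremum)
qed

lemma inflow_finite: "(\<integral>\<^sup>+y. Q (y, x) \<partial>count_space UNIV) < \<top>"
proof -
  have "(\<Sum>n. ennreal (q n) * indicator (set (tl (\<gamma> n))) x) \<le> (\<Sum>n. ennreal (q n))"
    by (intro suminf_le) (auto simp: indicator_def)
  then show ?thesis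
    using weights_finite by (simp add: inflow_eq le_less_trans top.not_eq_extremum)
qed

lemma flow_div_eq:
  "flow_div E Q x
     = enn2real (\<integral>\<^sup>+y. Q (x, y) \<partial>count_space UNIV) - enn2real (\<integral>\<^sup>+y. Q (y, x) \<partial>count_space UNIV)"
  unfolding flow_div_def
  using outflow_finite inflow_finite flow_nonneg flow_zero_outside
  by (subst (1 2) infsum_eq_enn2real_nn_integral) (auto simp flip: less_top)

text \<open>Every path contributes its vertices once to both sides: as an inner or final vertex on the
  left, as an inner or initial vertex on the right.\<close>
lemma outflow_plus_sinks:
  "(\<integral>\<^sup>+y. Q (x, y) \<partial>count_space UNIV) + (\<Sum>n. ennreal (q n) * indicator {last (\<gamma> n)} x)
     = (\<integral>\<^sup>+y. Q (y, x) \<partial>count_space UNIV) + (\<Sum>n. ennreal (q n) * indicator {hd (\<gamma> n)} x)"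
proof -
  have "ennreal (q n) * indicator (set (butlast (\<gamma> n))) x + ennreal (q n) * indicator {last (\<gamma> n)} x
      = ennreal (q n) * indicator (set (tl (\<gamma> n))) x + ennreal (q n) * indicator {hd (\<gamma> n)} x" for n
    by (simp add: path_nonempty path_distinct indicator_butlast_plus_last indicator_tl_plus_hd
        flip: distrib_left)
  then show ?thesis
    unfolding outflow_eq inflow_eq suminf_add[OF summableI summableI] by simp
qed

lemma mass_balance:
  fixes \<mu>1 \<mu>2 :: "'a pmf"
  assumes \<mu>1_V: "set_pmf \<mu>1 \<subseteq> V" and \<mu>2_V: "set_pmf \<mu>2 \<subseteq> V"
    and div: "\<forall>x\<in>V. flow_div E Q x = pmf \<mu>1 x - pmf \<mu>2 x"
  shows "pmf \<mu>1 x + (\<Sum>n. ennreal (q n) * indicator {last (\<gamma> n)} x)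
     = pmf \<mu>2 x + (\<Sum>n. ennreal (q n) * indicator {hd (\<gamma> n)} x)"
proof (cases "x \<in> V")
  case False
  then have "pmf \<mu>1 x = 0" "pmf \<mu>2 x = 0"
    using \<mu>1_V \<mu>2_V by (auto simp: set_pmf_iff)
  moreover have "x \<noteq> last (\<gamma> n)" "x \<noteq> hd (\<gamma> n)" for n
    using False path_in_V[of n] last_in_set[OF path_nonempty] hd_in_set[OF path_nonempty] by auto
  ultimately show ?thesis
    by (simp add: indicator_def)
next
  case True
  define out where "out = (\<integral>\<^sup>+y. Q (x, y) \<partial>count_space UNIV)"
  define inn where "inn = (\<integral>\<^sup>+y. Q (y, x) \<partial>count_space UNIV)"
  define sinks where "sinks = (\<Sum>n. ennreal (q n) * indicator {last (\<gamma> n)} x)"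
  define sources where "sources = (\<Sum>n. ennreal (q n) * indicator {hd (\<gamma> n)} x)"
  have "pmf \<mu>1 x + enn2real inn = pmf \<mu>2 x + enn2real out"
    using div True flow_div_eq[of x] unfolding out_def inn_def by simp
  then have "ennreal (pmf \<mu>1 x + enn2real inn) = ennreal (pmf \<mu>2 x + enn2real out)"
    by simp
  then have balance: "pmf \<mu>1 x + inn = pmf \<mu>2 x + out"
    using outflow_finite[of x] inflow_finite[of x] unfolding out_def inn_def
    by (simp add: ennreal_plus)
  have "out + (pmf \<mu>1 x + sinks) = pmf \<mu>1 x + (out + sinks)"
    by (simp add: ac_simps)
  also have "\<dots> = (pmf \<mu>1 x + inn) + sources"
    using outflow_plus_sinks[of x] unfolding out_def inn_def sinks_def sources_def
    by (simp add: ac_simps)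
  also have "\<dots> = out + (pmf \<mu>2 x + sources)"
    by (simp only: balance) (simp add: ac_simps)
  finally show ?thesis
    using outflow_finite[of x] unfolding out_def sinks_def sources_def
    by (auto simp: ennreal_add_left_cancel)
qed

end

theorem theorem3p7:
  fixes V :: "'a set" and E :: "('a \<times> 'a) set" and \<mu>1 \<mu>2 :: "'a pmf"
    and Q :: "'a \<times> 'a \<Rightarrow> real"
  assumes "countable V" and "infinite V" and "E \<subseteq> V \<times> V"
    and "set_pmf \<mu>1 \<subseteq> V" and "set_pmf \<mu>2 \<subseteq> V"
    and "is_flow V E Q" and "finitely_decomposable V E Q" and "acyclic_flow E Q"
    and "\<forall>x\<in>V. flow_div E Q x = pmf \<mu>1 x - pmf \<mu>2 x"
  shows "\<exists>\<rho>. is_coupling \<rho> \<mu>1 \<mu>2 \<and>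
           (\<forall>x y. (x, y) \<notin> (flow_support E Q)\<^sup>* \<longrightarrow> pmf \<rho> (x, y) = 0)"
proof -
  from \<open>finitely_decomposable V E Q\<close> obtain \<gamma> q where "path_decomposition V E Q \<gamma> q"
    unfolding finitely_decomposable_def path_decomposition_def by blast
  then interpret path_decomposition V E Q \<gamma> q .
  interpret balanced_jumps "\<lambda>x. pmf \<mu>1 x" "\<lambda>x. pmf \<mu>2 x" "\<lambda>n. ennreal (q n)"
      "\<lambda>n. hd (\<gamma> n)" "\<lambda>n. last (\<gamma> n)"
    using weights_finite mass_balance[OF assms(4,5,9)]
    by unfold_locales (simp_all add: nn_integral_pmf)
  have "jumps \<subseteq> (flow_support E Q)\<^sup>*"
    using directed_path_hd_last[OF path_in_flow_support]
    by (auto simp: jumps_def ennreal_eq_0_iff not_le)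
  then have "jumps\<^sup>* \<subseteq> (flow_support E Q)\<^sup>*"
    by (rule rtrancl_subset_rtrancl)
  moreover obtain \<rho> where "is_coupling \<rho> \<mu>1 \<mu>2"
    and "\<And>x y. pmf \<rho> (x, y) \<noteq> 0 \<Longrightarrow> plan x y \<noteq> 0"
    using coupling_of_transport_plan[OF plan_fst_marginal plan_snd_marginal] by blast
  ultimately show ?thesis
    using plan_support by blast
qed

end
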